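(* Let $r\in\mathbb N$, $k\in\mathbb Z$ with $0\le k\le r$, and suppose Assumption (A1) holds. Then the mapping $$\hat\psi\mapsto \sum_{i=0}^{\lfloor (k-1)/2\rfloor-1}\|\hat\psi^{(i)}(-1)\|+\sum_{i=0}^{\lfloor k/2\rfloor-1}\|\hat\psi^{(i)}(1)\|+\sum_{i=\delta_{0,k}}^{r-k}\Big\|\widehat{\mathscr I}\big[\hat\psi(\hat t)(1+\hat t)^i\big]\Big\|$$ defines a norm on $P_{r-1}([-1,1],\mathbb R^d)$.
   Context: $\|\cdot\|$ is the Euclidean norm on $\mathbb R^d$; $P_s([-1,1],\mathbb R^d)$ denotes $\mathbb R^d$-valued polynomials of degree at most $s$; $\delta_{i,j}$ is the Kronecker symbol; empty sums are zero. $\widehat{\mathscr I}$ is a linear functional (reference integrator) defined on $C^{k_{\mathscr I}}([-1,1])$, acting componentwise on vector-valued functions. Assumption (A1): whenever $\hat\psi\in P_{r-\max\{1,k\}}([-1,1])$ satisfies $\widehat{\mathscr I}\big[(1-\hat t)^{\lfloor k/2\rfloor}(1+\hat t)^{|\lfloor (k-1)/2\rfloor|}\hat\psi\,\hat\varphi\big]=0$ for all $\hat\varphi\in P_{r-\max\{1,k\}}([-1,1])$, then $\hat\psi\equiv0$. *)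

theory Defs
  imports "HOL-Analysis.Analysis" "HOL-Computational_Algebra.Polynomial"
begin

definition Ppoly :: "int \<Rightarrow> real poly set" where
  "Ppoly s = {p. p = 0 \<or> int (degree p) \<le> s}"

definition Pvec :: "int \<Rightarrow> (real \<Rightarrow> real ^ 'd) set" where
  "Pvec s = {f. \<exists>p :: 'd \<Rightarrow> real poly. (\<forall>j. p j \<in> Ppoly s) \<and>
                 (\<forall>t. f t = (\<chi> j. poly (p j) t))}"

definition Ck_on :: "nat \<Rightarrow> (real \<Rightarrow> real) set" where
  "Ck_on m = {f. \<exists>D :: nat \<Rightarrow> real \<Rightarrow> real. D 0 = f \<and>
      (\<forall>j<m. \<forall>x\<in>{-1..1}. (D j has_real_derivative D (Suc j) x) (at x within {-1..1})) \<and>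
      continuous_on {-1..1} (D m)}"

definition vderiv :: "nat \<Rightarrow> (real \<Rightarrow> real ^ 'd) \<Rightarrow> real \<Rightarrow> real ^ 'd" where
  "vderiv i f x = (\<chi> j. (deriv ^^ i) (\<lambda>t. f t $ j) x)"

definition vapply :: "((real \<Rightarrow> real) \<Rightarrow> real) \<Rightarrow> (real \<Rightarrow> real ^ 'd) \<Rightarrow> real ^ 'd" where
  "vapply I f = (\<chi> j. I (\<lambda>t. f t $ j))"

definition is_norm_on :: "(real \<Rightarrow> real ^ 'd) set \<Rightarrow> ((real \<Rightarrow> real ^ 'd) \<Rightarrow> real) \<Rightarrow> bool" where
  "is_norm_on V N \<longleftrightarrow>
     (\<forall>f\<in>V. 0 \<le> N f) \<and>
     (\<forall>f\<in>V. \<forall>c. N (\<lambda>t. c *\<^sub>R f t) = \<bar>c\<bar> * N f) \<and>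
     (\<forall>f\<in>V. \<forall>g\<in>V. N (\<lambda>t. f t + g t) \<le> N f + N g) \<and>
     (\<forall>f\<in>V. N f = 0 \<longrightarrow> f = (\<lambda>t. 0))"

definition Nmap :: "((real \<Rightarrow> real) \<Rightarrow> real) \<Rightarrow> nat \<Rightarrow> int \<Rightarrow> (real \<Rightarrow> real ^ 'd) \<Rightarrow> real" where
  "Nmap I r k f =
     (\<Sum>i\<in>{0..<nat ((k - 1) div 2)}. norm (vderiv i f (-1)))
   + (\<Sum>i\<in>{0..<nat (k div 2)}. norm (vderiv i f 1))
   + (\<Sum>i\<in>{(if k = 0 then 1 else 0)..nat (int r - k)}.
        norm (vapply I (\<lambda>t. (1 + t) ^ i *\<^sub>R f t)))"

end

(*
  A polynomial q of degree < r whose degrees of freedom vanish is zero. The vanishing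
  derivatives at -1 and 1 make q = (1 - t)^(k div 2) (1 + t)^((k - 1) div 2) psi with
  deg psi <= r - k; the vanishing moments against (1 + t)^i, i <= r - k, extend by linearity
  to all test polynomials of degree <= r - k, so (A1) forces psi = 0. For k = 0 there are no
  boundary conditions and the weight 1 + t of (A1) is supplied by the moments with i >= 1.
  Nonnegativity, homogeneity and the triangle inequality hold because every degree of
  freedom is linear in q.
*)
theory Submission
  imports Defs
begin

lemma higher_deriv_poly:
  fixes p :: "'a::real_normed_field poly"
  shows "(deriv ^^ i) (poly p) = poly ((pderiv ^^ i) p)"
proof (induction i)
  case (Suc i)
  have "deriv (poly q) = poly (pderiv q)" for q :: "'a poly"
    by (rule ext, rule DERIV_imp_deriv, rule poly_DERIV)
  with Suc show ?case
    by simp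
qed simp

lemma poly_in_Ck_on: "poly p \<in> Ck_on m"
  unfolding Ck_on_def
proof (intro CollectI exI[of _ "\<lambda>j. poly ((pderiv ^^ j) p)"] conjI allI impI ballI)
  show "poly ((pderiv ^^ 0) p) = poly p"
    by simp
  show "continuous_on {-1..1} (poly ((pderiv ^^ m) p))"
    by (intro continuous_intros)
  fix j x
  show "(poly ((pderiv ^^ j) p) has_real_derivative poly ((pderiv ^^ Suc j) p) x)
          (at x within {-1..1})"
    using has_field_derivative_at_within[OF poly_DERIV] by simp
qed

lemma power_root_dvd_if_higher_pderivs_vanish:
  fixes q :: "'a::{idom,semiring_char_0} poly"
  assumes "\<forall>i<n. poly ((pderiv ^^ i) q) c = 0"
  shows "[:-c, 1:] ^ n dvd q"
  unfolding order_divides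
  using assms
proof (induction n arbitrary: q)
  case (Suc n)
  show ?case
  proof (cases "pderiv q = 0")
    case True
    then show ?thesis
      using Suc.prems pderiv_iszero[of q] by force
  next
    case False
    have "q \<noteq> 0" "poly q c = 0"
      using False Suc.prems by auto
    moreover have "\<forall>i<n. poly ((pderiv ^^ i) (pderiv q)) c = 0"
      using Suc.prems by (metis Suc_mono comp_apply funpow_Suc_right)
    ultimately show ?thesis
      using Suc.IH[of "pderiv q"] False order_pderiv by force
  qed
qed simp

lemma boundary_factors_dvd:
  fixes q :: "'a::field_char_0 poly"
  assumes "\<forall>i<a. poly ((pderiv ^^ i) q) (-1) = 0" and "\<forall>i<b. poly ((pderiv ^^ i) q) 1 = 0"
  shows "[:1,-1:] ^ b * [:1,1:] ^ a dvd q"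
proof -
  obtain q1 where q1: "q = [:1,1:] ^ a * q1"
    using power_root_dvd_if_higher_pderivs_vanish[OF assms(1)] by (auto elim: dvdE)
  have "order 1 ([:1,1::'a:] ^ a) = 0"
    by (rule order_0I) (simp add: poly_power)
  then have "q1 = 0 \<or> b \<le> order 1 q1"
    using power_root_dvd_if_higher_pderivs_vanish[OF assms(2)]
    by (cases "q1 = 0") (auto simp: order_divides q1 order_mult)
  then have "[:-1,1:] ^ b dvd q1"
    using q1 by (auto simp: order_divides)
  moreover have "[:1,-1::'a:] ^ b = smult ((-1) ^ b) ([:-1,1:] ^ b)"
    by (simp flip: smult_power)
  ultimately have "[:1,-1:] ^ b dvd q1"
    by (simp add: smult_dvd_iff)
  then show ?thesis
    using q1 by (simp add: mult.commute mult_dvd_mono)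
qed

lemma linear_functional_sum:
  fixes J :: "'a::comm_ring_1 poly \<Rightarrow> 'a"
  assumes lin: "\<And>a b p q. J (smult a p + smult b q) = a * J p + b * J q"
  shows "J (\<Sum>i\<in>S. smult (c i) (P i)) = (\<Sum>i\<in>S. c i * J (P i))"
proof (induction S rule: infinite_finite_induct)
  case (infinite S)
  then show ?case
    using lin[of 0 0 0 0] by simp
next
  case empty
  then show ?case
    using lin[of 0 0 0 0] by simp
next
  case (insert x S)
  then show ?case
    using lin[of "c x" "P x" 1] by simp
qed

lemma linear_functional_vanishes_on_Ppoly_multiples:
  fixes J :: "real poly \<Rightarrow> real" and m :: int
  assumes lin: "\<And>a b p q. J (smult a p + smult b q) = a * J p + b * J q"
    and vanish: "\<And>i. int i \<le> m \<Longrightarrow> J (u * [:1,1:] ^ i) = 0"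
    and \<phi>: "\<phi> \<in> Ppoly m"
  shows "J (u * \<phi>) = 0"
proof -
  \<comment> \<open>\<phi> expanded in powers of 1 + t\<close>
  define \<rho> where "\<rho> = \<phi> \<circ>\<^sub>p [:-1,1:]"
  have "u * \<phi> = (\<Sum>i\<le>degree \<rho>. smult (coeff \<rho> i) (u * [:1,1:] ^ i))"
  proof (rule poly_ext)
    fix t
    have "poly \<phi> t = poly \<rho> (1 + t)"
      by (simp add: \<rho>_def poly_pcompose)
    then show "poly (u * \<phi>) t = poly (\<Sum>i\<le>degree \<rho>. smult (coeff \<rho> i) (u * [:1,1:] ^ i)) t"
      by (simp add: poly_altdef[of \<rho>] poly_sum poly_power sum_distrib_left mult_ac)
  qed
  then have "J (u * \<phi>) = (\<Sum>i\<le>degree \<rho>. coeff \<rho> i * J (u * [:1,1:] ^ i))"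
    by (simp add: linear_functional_sum[OF lin])
  also have "\<dots> = 0"
    using \<phi> vanish by (intro sum.neutral) (auto simp: Ppoly_def \<rho>_def degree_pcompose)
  finally show ?thesis .
qed

lemma poly_eq_0_if_boundary_derivs_and_moments_vanish:
  fixes J :: "real poly \<Rightarrow> real" and m :: int and a b :: nat
  assumes lin: "\<And>a b p q. J (smult a p + smult b q) = a * J p + b * J q"
    and unisolvent: "\<forall>\<psi>\<in>Ppoly m.
          (\<forall>\<phi>\<in>Ppoly m. J ([:1,-1:] ^ b * [:1,1:] ^ a * \<psi> * \<phi>) = 0) \<longrightarrow> \<psi> = 0"
    and q: "q \<in> Ppoly (m + int (a + b))"
    and at_minus_one: "\<forall>i<a. poly ((pderiv ^^ i) q) (-1) = 0"
    and at_one: "\<forall>i<b. poly ((pderiv ^^ i) q) 1 = 0"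
    and moments: "\<forall>i. int i \<le> m \<longrightarrow> J ([:1,1:] ^ i * q) = 0"
  shows "q = 0"
proof -
  define w :: "real poly" where "w = [:1,-1:] ^ b * [:1,1:] ^ a"
  obtain \<psi> where q_eq: "q = w * \<psi>"
    using boundary_factors_dvd[OF at_minus_one at_one] by (auto simp: w_def elim: dvdE)
  have "w \<noteq> 0"
    by (simp add: w_def)
  have "\<psi> \<in> Ppoly m"
  proof (cases "\<psi> = 0")
    case False
    then have "degree q = a + b + degree \<psi>"
      using \<open>w \<noteq> 0\<close> by (simp add: q_eq degree_mult_eq w_def degree_power_eq)
    then show ?thesis
      using q False \<open>w \<noteq> 0\<close> by (auto simp: Ppoly_def q_eq)
  qed (simp add: Ppoly_def)
  moreover have "J (w * \<psi> * \<phi>) = 0" if "\<phi> \<in> Ppoly m" for \<phi>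
  proof (rule linear_functional_vanishes_on_Ppoly_multiples[OF lin _ that])
    show "J (w * \<psi> * [:1,1:] ^ i) = 0" if "int i \<le> m" for i
      using moments that by (simp add: q_eq mult_ac)
  qed
  ultimately show ?thesis
    using unisolvent q_eq by (simp add: w_def)
qed

lemma poly_eq_0_if_dofs_vanish:
  fixes J :: "real poly \<Rightarrow> real" and r :: nat and k :: int
  assumes lin: "\<And>a b p q. J (smult a p + smult b q) = a * J p + b * J q"
    and k: "0 \<le> k" "k \<le> int r"
    and unisolvent: "\<forall>\<psi>\<in>Ppoly (int r - max 1 k). (\<forall>\<phi>\<in>Ppoly (int r - max 1 k).
          J ([:1,-1:] ^ nat (k div 2) * [:1,1:] ^ nat \<bar>(k - 1) div 2\<bar> * \<psi> * \<phi>) = 0)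
          \<longrightarrow> \<psi> = 0"
    and q: "q \<in> Ppoly (int r - 1)"
    and at_minus_one: "\<forall>i<nat ((k - 1) div 2). poly ((pderiv ^^ i) q) (-1) = 0"
    and at_one: "\<forall>i<nat (k div 2). poly ((pderiv ^^ i) q) 1 = 0"
    and moments: "\<forall>i\<in>{(if k = 0 then 1 else 0)..nat (int r - k)}. J ([:1,1:] ^ i * q) = 0"
  shows "q = 0"
proof (cases "k = 0")
  case True
  text \<open>The weight 1 + t of A1 is absorbed into the functional, which leaves no boundary
    conditions and the moments of orders 1, ..., r.\<close>
  define J' where "J' p = J ([:1,1:] * p)" for p
  show ?thesis
  proof (rule poly_eq_0_if_boundary_derivs_and_moments_vanish[where J = J' and a = 0 and b = 0])
    show "J' (smult a p + smult b q) = a * J' p + b * J' q" for a b p q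
      by (simp only: J'_def distrib_left mult_smult_right lin)
    show "\<forall>\<psi>\<in>Ppoly (int r - 1). (\<forall>\<phi>\<in>Ppoly (int r - 1).
            J' ([:1,-1:] ^ 0 * [:1,1:] ^ 0 * \<psi> * \<phi>) = 0) \<longrightarrow> \<psi> = 0"
      using unisolvent True by (simp only: J'_def power_0 mult_1_left mult.assoc) simp
    show "\<forall>i. int i \<le> int r - 1 \<longrightarrow> J' ([:1,1:] ^ i * q) = 0"
    proof (intro allI impI)
      fix i assume "int i \<le> int r - 1"
      then have "J ([:1,1:] ^ Suc i * q) = 0"
        using True by (intro moments[rule_format]) auto
      then show "J' ([:1,1:] ^ i * q) = 0"
        by (simp only: J'_def power_Suc mult.assoc)
    qed
  qed (use q in auto)
next
  case False
  show ?thesis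
  proof (rule poly_eq_0_if_boundary_derivs_and_moments_vanish
      [OF lin _ _ at_minus_one at_one, where m = "int r - k"])
    show "\<forall>\<psi>\<in>Ppoly (int r - k). (\<forall>\<phi>\<in>Ppoly (int r - k).
            J ([:1,-1:] ^ nat (k div 2) * [:1,1:] ^ nat ((k - 1) div 2) * \<psi> * \<phi>) = 0)
            \<longrightarrow> \<psi> = 0"
      using unisolvent False k by (simp add: max_def)
    show "q \<in> Ppoly (int r - k + int (nat ((k - 1) div 2) + nat (k div 2)))"
    proof -
      have "(k - 1) div 2 + k div 2 = k - 1"
        by presburger
      then show ?thesis
        using q False k by simp
    qed
    show "\<forall>i. int i \<le> int r - k \<longrightarrow> J ([:1,1:] ^ i * q) = 0"
      using moments False by auto
  qed
qed

definition linear_on :: "(real \<Rightarrow> real) set \<Rightarrow> ((real \<Rightarrow> real) \<Rightarrow> real) \<Rightarrow> bool" where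
  "linear_on V I \<longleftrightarrow> (\<forall>f\<in>V. \<forall>g\<in>V. \<forall>a b. I (\<lambda>t. a * f t + b * g t) = a * I f + b * I g)"

lemma linear_on_poly_functional:
  assumes "linear_on (Ck_on m) I"
  shows "I (poly (smult a p + smult b q)) = a * I (poly p) + b * I (poly q)"
proof -
  have "poly (smult a p + smult b q) = (\<lambda>t. a * poly p t + b * poly q t)"
    by (simp add: fun_eq_iff)
  then show ?thesis
    using assms poly_in_Ck_on unfolding linear_on_def by metis
qed

lemma vapply_linear:
  assumes "linear_on V I" and "\<And>j. (\<lambda>t. f t $ j) \<in> V" and "\<And>j. (\<lambda>t. g t $ j) \<in> V"
  shows "vapply I (\<lambda>t. a *\<^sub>R f t + b *\<^sub>R g t) = a *\<^sub>R vapply I f + b *\<^sub>R vapply I g"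
  using assms by (simp add: vapply_def vec_eq_iff linear_on_def)

lemma Pvec_obtain:
  assumes "f \<in> Pvec s"
  obtains p where "\<And>j. p j \<in> Ppoly s" and "f = (\<lambda>t. \<chi> j. poly (p j) t)"
  using assms unfolding Pvec_def by (auto simp: fun_eq_iff)

lemma vderiv_poly_vec:
  "vderiv i (\<lambda>t. \<chi> j. poly (p j) t) x = (\<chi> j. poly ((pderiv ^^ i) (p j)) x)"
  by (simp add: vderiv_def higher_deriv_poly)

lemma vapply_moment_poly_vec:
  "vapply I (\<lambda>t. (1 + t) ^ i *\<^sub>R (\<chi> j. poly (p j) t)) = (\<chi> j. I (poly ([:1,1:] ^ i * p j)))"
proof -
  have "poly ([:1,1:] ^ i * p j) = (\<lambda>t. (1 + t) ^ i * poly (p j) t)" for j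
    by (simp add: fun_eq_iff poly_power)
  then show ?thesis
    by (simp add: vapply_def)
qed

lemma vderiv_linear_Pvec:
  assumes "f \<in> Pvec s" and "g \<in> Pvec s"
  shows "vderiv i (\<lambda>t. a *\<^sub>R f t + b *\<^sub>R g t) x = a *\<^sub>R vderiv i f x + b *\<^sub>R vderiv i g x"
proof -
  obtain p q where f: "f = (\<lambda>t. \<chi> j. poly (p j) t)" and g: "g = (\<lambda>t. \<chi> j. poly (q j) t)"
    using assms by (metis Pvec_obtain)
  have combination: "(\<lambda>t. a *\<^sub>R f t + b *\<^sub>R g t)
      = (\<lambda>t. \<chi> j. poly (smult a (p j) + smult b (q j)) t)"
    by (simp add: f g vec_eq_iff fun_eq_iff)
  show ?thesis
    unfolding combination unfolding f g vderiv_poly_vec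
    by (simp add: vec_eq_iff higher_pderiv_add higher_pderiv_smult)
qed

lemma vapply_moment_linear_Pvec:
  assumes "linear_on (Ck_on m) I" and "f \<in> Pvec s" and "g \<in> Pvec s"
  shows "vapply I (\<lambda>t. (1 + t) ^ i *\<^sub>R (a *\<^sub>R f t + b *\<^sub>R g t))
       = a *\<^sub>R vapply I (\<lambda>t. (1 + t) ^ i *\<^sub>R f t) + b *\<^sub>R vapply I (\<lambda>t. (1 + t) ^ i *\<^sub>R g t)"
proof -
  obtain p q where f: "f = (\<lambda>t. \<chi> j. poly (p j) t)" and g: "g = (\<lambda>t. \<chi> j. poly (q j) t)"
    using assms by (metis Pvec_obtain)
  have moment_Ck: "(\<lambda>t. ((1 + t) ^ i *\<^sub>R h t) $ j) \<in> Ck_on m"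
    if "h = (\<lambda>t. \<chi> j. poly (r j) t)" for h r j
  proof -
    have "(\<lambda>t. ((1 + t) ^ i *\<^sub>R h t) $ j) = poly ([:1,1:] ^ i * r j)"
      by (simp add: that fun_eq_iff poly_power)
    then show ?thesis
      by (simp add: poly_in_Ck_on)
  qed
  have combination: "(\<lambda>t. (1 + t) ^ i *\<^sub>R (a *\<^sub>R f t + b *\<^sub>R g t))
      = (\<lambda>t. a *\<^sub>R ((1 + t) ^ i *\<^sub>R f t) + b *\<^sub>R ((1 + t) ^ i *\<^sub>R g t))"
    by (simp add: fun_eq_iff scaleR_add_right mult.commute[of a] mult.commute[of b])
  show ?thesis
    unfolding combination by (rule vapply_linear[OF assms(1) moment_Ck[OF f] moment_Ck[OF g]])
qed

lemma Nmap_nonneg: "0 \<le> Nmap I r k f"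
  unfolding Nmap_def by (intro add_nonneg_nonneg sum_nonneg norm_ge_zero)

lemma Nmap_scaleR:
  assumes "linear_on (Ck_on m) I" and "f \<in> Pvec s"
  shows "Nmap I r k (\<lambda>t. c *\<^sub>R f t) = \<bar>c\<bar> * Nmap I r k f"
proof -
  have "vderiv i (\<lambda>t. c *\<^sub>R f t) x = c *\<^sub>R vderiv i f x" for i x
    using vderiv_linear_Pvec[OF assms(2,2), of i c 0] by simp
  moreover have "vapply I (\<lambda>t. (1 + t) ^ i *\<^sub>R (c *\<^sub>R f t))
                 = c *\<^sub>R vapply I (\<lambda>t. (1 + t) ^ i *\<^sub>R f t)" for i
    using vapply_moment_linear_Pvec[OF assms(1,2,2), of i c 0] by simp
  ultimately show ?thesis
    by (simp add: Nmap_def sum_distrib_left distrib_left)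
qed

lemma sum_norm_add_le:
  fixes u v :: "'i \<Rightarrow> 'a::real_normed_vector"
  shows "(\<Sum>i\<in>S. norm (u i + v i)) \<le> (\<Sum>i\<in>S. norm (u i)) + (\<Sum>i\<in>S. norm (v i))"
  by (simp add: sum.distrib[symmetric] sum_mono norm_triangle_ineq)

lemma Nmap_add_le:
  assumes "linear_on (Ck_on m) I" and "f \<in> Pvec s" and "g \<in> Pvec s"
  shows "Nmap I r k (\<lambda>t. f t + g t) \<le> Nmap I r k f + Nmap I r k g"
proof -
  have vderiv_add: "vderiv i (\<lambda>t. f t + g t) x = vderiv i f x + vderiv i g x" for i x
    using vderiv_linear_Pvec[OF assms(2,3), of i 1 1] by simp
  have vapply_add: "vapply I (\<lambda>t. (1 + t) ^ i *\<^sub>R (f t + g t))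
      = vapply I (\<lambda>t. (1 + t) ^ i *\<^sub>R f t) + vapply I (\<lambda>t. (1 + t) ^ i *\<^sub>R g t)" for i
    using vapply_moment_linear_Pvec[OF assms, of i 1 1] by simp
  show ?thesis
    unfolding Nmap_def vderiv_add vapply_add
    by (rule order_trans[OF add_mono[OF add_mono[OF sum_norm_add_le sum_norm_add_le] sum_norm_add_le]])
      linarith
qed

lemma Nmap_eq_0_imp_zero:
  fixes f :: "real \<Rightarrow> real ^ 'd" and r :: nat and k :: int
  assumes lin: "linear_on (Ck_on m) I" and k: "0 \<le> k" "k \<le> int r"
    and unisolvent: "\<forall>\<psi>\<in>Ppoly (int r - max 1 k). (\<forall>\<phi>\<in>Ppoly (int r - max 1 k).
          I (\<lambda>t. (1 - t) ^ nat (k div 2) * (1 + t) ^ nat \<bar>(k - 1) div 2\<bar>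
                  * poly \<psi> t * poly \<phi> t) = 0) \<longrightarrow> \<psi> = 0"
    and f: "f \<in> Pvec (int r - 1)" and N0: "Nmap I r k f = 0"
  shows "f = (\<lambda>t. 0)"
proof -
  obtain p where p: "\<And>j. p j \<in> Ppoly (int r - 1)" and f_eq: "f = (\<lambda>t. \<chi> j. poly (p j) t)"
    using Pvec_obtain[OF f] by blast
  define J where "J q = I (poly q)" for q
  have linJ: "J (smult a q + smult b q') = a * J q + b * J q'" for a b q q'
    unfolding J_def using lin by (rule linear_on_poly_functional)
  have "poly ([:1,-1:] ^ nat (k div 2) * [:1,1:] ^ nat \<bar>(k - 1) div 2\<bar> * \<psi> * \<phi>)
      = (\<lambda>t. (1 - t) ^ nat (k div 2) * (1 + t) ^ nat \<bar>(k - 1) div 2\<bar> * poly \<psi> t * poly \<phi> t)"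
    for \<psi> \<phi> :: "real poly"
    by (simp add: fun_eq_iff poly_power)
  then have unisolventJ: "\<forall>\<psi>\<in>Ppoly (int r - max 1 k). (\<forall>\<phi>\<in>Ppoly (int r - max 1 k).
      J ([:1,-1:] ^ nat (k div 2) * [:1,1:] ^ nat \<bar>(k - 1) div 2\<bar> * \<psi> * \<phi>) = 0) \<longrightarrow> \<psi> = 0"
    using unisolvent by (simp add: J_def)
  have "(\<forall>i<nat ((k - 1) div 2). vderiv i f (-1) = 0) \<and> (\<forall>i<nat (k div 2). vderiv i f 1 = 0)
      \<and> (\<forall>i\<in>{(if k = 0 then 1 else 0)..nat (int r - k)}.
           vapply I (\<lambda>t. (1 + t) ^ i *\<^sub>R f t) = 0)"
    using N0 by (simp add: Nmap_def add_nonneg_eq_0_iff sum_nonneg sum_nonneg_eq_0_iff)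
  then have "p j = 0" for j
    using poly_eq_0_if_dofs_vanish[OF linJ k unisolventJ p]
    by (simp add: f_eq vderiv_poly_vec vapply_moment_poly_vec vec_eq_iff J_def)
  then show ?thesis
    by (simp add: f_eq vec_eq_iff fun_eq_iff)
qed

theorem mainTheorem2:
  fixes I :: "(real \<Rightarrow> real) \<Rightarrow> real" and kI :: nat and r :: nat and k :: int
  assumes lin: "\<forall>f\<in>Ck_on kI. \<forall>g\<in>Ck_on kI. \<forall>a b.
                  I (\<lambda>t. a * f t + b * g t) = a * I f + b * I g"
    and k0: "0 \<le> k" and kr: "k \<le> int r"
    and A1: "\<forall>\<psi>\<in>Ppoly (int r - max 1 k).
               (\<forall>\<phi>\<in>Ppoly (int r - max 1 k).
                  I (\<lambda>t. (1 - t) ^ nat (k div 2) * (1 + t) ^ nat \<bar>(k - 1) div 2\<bar>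
                          * poly \<psi> t * poly \<phi> t) = 0)
               \<longrightarrow> \<psi> = 0"
  shows "is_norm_on (Pvec (int r - 1) :: (real \<Rightarrow> real ^ 'd) set) (Nmap I r k)"
proof -
  have "linear_on (Ck_on kI) I"
    using lin unfolding linear_on_def .
  then show ?thesis
    unfolding is_norm_on_def
    using Nmap_nonneg Nmap_scaleR Nmap_add_le Nmap_eq_0_imp_zero[OF _ k0 kr A1] by blast
qed

end
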